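(* Let $0<b<c$ and $x_1,\dots,x_T\in\mathbb{R}^d$. Define $D_0=\frac{bc}{c-b}I$ and $D_t=\big(D_{t-1}^{-1}+c^{-1}I\big)^{-1}+x_tx_t^\top$ for $t\ge1$. Then \[ \sum_{t=1}^T x_t^\top D_t^{-1}x_t\le \ln\Big|\tfrac1b D_T\Big|+c^{-1}\sum_{t=1}^T\mathrm{Tr}(D_{t-1}), \] where $|\cdot|$ denotes the determinant. *)

theory Defs
  imports "HOL-Analysis.Analysis"
begin

definition outer_prod :: "real^'n \<Rightarrow> real^'n^'n" where
  "outer_prod x = (\<chi> i j. x $ i * x $ j)"

fun Dseq :: "real \<Rightarrow> real \<Rightarrow> (nat \<Rightarrow> real^'n) \<Rightarrow> nat \<Rightarrow> real^'n^'n" where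
  "Dseq b c x 0 = (b * c / (c - b)) *\<^sub>R mat 1"
| "Dseq b c x (Suc t) =
     matrix_inv (matrix_inv (Dseq b c x t) + (1 / c) *\<^sub>R mat 1) + outer_prod (x (Suc t))"

end

theory Submission
  imports Defs
begin

text \<open>
  Put A = (D_{t-1}^{-1} + I/c)^{-1}, so that D_t = A + x x^T with x = x_t, and let
  q = x^T A^{-1} x \<ge> 0. The matrix determinant lemma and Sherman-Morrison give
  |D_t| = |A| (1 + q) and x^T D_t^{-1} x = q/(1 + q) \<le> ln (1 + q). On the other hand
  D_{t-1} A^{-1} = I + D_{t-1}/c, whose determinant is by Hadamard's inequality at most
  \<Prod>_i (1 + (D_{t-1})_ii / c) \<le> exp (tr D_{t-1} / c). So the t-th summand is at most
  ln |D_t| - ln |D_{t-1}| + tr D_{t-1} / c; the sum telescopes, and |D_0| = (bc/(c-b))^d \<ge> b^d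
  bounds ln |D_T| - ln |D_0| by ln |D_T / b|.
\<close>

lemma
  fixes A :: "'a::semiring_1^'n^'m"
  assumes "invertible A"
  shows matrix_inv_right: "A ** matrix_inv A = mat 1"
    and matrix_inv_left: "matrix_inv A ** A = mat 1"
proof -
  have "\<exists>A'. A ** A' = mat 1 \<and> A' ** A = mat 1"
    using assms by (simp add: invertible_def)
  hence "A ** matrix_inv A = mat 1 \<and> matrix_inv A ** A = mat 1"
    unfolding matrix_inv_def by (rule someI_ex)
  thus "A ** matrix_inv A = mat 1" "matrix_inv A ** A = mat 1" by auto
qed

lemma matrix_inv_unique:
  fixes A X :: "'a::semiring_1^'n^'n"
  assumes "invertible A" "X ** A = mat 1"
  shows "X = matrix_inv A"
  by (metis assms matrix_inv_right matrix_mul_assoc matrix_mul_lid matrix_mul_rid)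

lemma matrix_inv_mult_vector:
  fixes A :: "'a::comm_semiring_1^'n^'n"
  assumes "invertible A"
  shows "A *v (matrix_inv A *v v) = v" "matrix_inv A *v (A *v v) = v"
  using matrix_inv_right[OF assms] matrix_inv_left[OF assms] by (simp_all add: matrix_vector_mul_assoc)

lemma det_matrix_inv:
  fixes A :: "'a::field^'n^'n"
  assumes "invertible A"
  shows "det (matrix_inv A) = 1 / det A"
  using det_mul[of A "matrix_inv A"] matrix_inv_right[OF assms]
  by (metis det_I eq_divide_eq mult.commute mult_zero_left zero_neq_one)

lemma det_scaleR:
  fixes A :: "real^'n^'n"
  shows "det (k *\<^sub>R A) = k ^ CARD('n) * det A"
proof -
  have "k *\<^sub>R A = mat k ** A"
    by (simp add: vec_eq_iff matrix_matrix_mult_def mat_def if_distrib[of "\<lambda>x. x * _"]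
        sum.delta cong: if_cong)
  thus ?thesis by (simp add: det_mul det_diagonal mat_def)
qed

lemma trace_scaleR: "trace (k *\<^sub>R (A::real^'n^'n)) = k * trace A"
  by (simp add: trace_def sum_distrib_left)

subsection \<open>Rank-one matrices and the matrix determinant lemma\<close>

definition rank_one :: "'a::times^'n \<Rightarrow> 'a^'m \<Rightarrow> 'a^'m^'n" where
  "rank_one u v = (\<chi> i j. u $ i * v $ j)"

lemma outer_prod_eq_rank_one: "outer_prod x = rank_one x x"
  by (simp add: outer_prod_def rank_one_def)

lemma rank_one_mult_vector: "rank_one u v *v w = (v \<bullet> w) *\<^sub>R (u :: real^'n)"
  by (simp add: rank_one_def matrix_vector_mult_def vec_eq_iff inner_vec_def
      sum_distrib_left mult_ac)

lemma matrix_mult_rank_one: "(A::real^'n^'n) ** rank_one u v = rank_one (A *v u) v"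
  by (simp add: rank_one_def matrix_matrix_mult_def matrix_vector_mult_def vec_eq_iff
      sum_distrib_left sum_distrib_right mult_ac)

lemma rank_one_mult_matrix: "rank_one u v ** (A::real^'n^'n) = rank_one u (transpose A *v v)"
  by (simp add: rank_one_def matrix_matrix_mult_def matrix_vector_mult_def transpose_def
      vec_eq_iff sum_distrib_left mult_ac)

lemma matrix_add_rdistrib: "((A::'a::semiring_1^'n^'m) + B) ** C = A ** C + B ** C"
  by (simp add: matrix_matrix_mult_def vec_eq_iff distrib_right sum.distrib)

lemma det_replace_column_mat1:
  "det ((\<chi> i j. if j = k then u $ i else mat 1 $ i $ j) :: real^'n^'n) = u $ k"
  using cramer_lemma[of k "mat 1" u] unfolding matrix_vector_mul_lid det_I by simp

lemma det_mat1_add_rank_one: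
  fixes u v :: "real^'n"
  shows "det (mat 1 + rank_one u v) = 1 + u \<bullet> v"
proof (cases "u = 0")
  case True
  hence "rank_one u v = 0" by (simp add: rank_one_def vec_eq_iff)
  thus ?thesis using True by simp
next
  case False
  then obtain k where uk: "u $ k \<noteq> 0" by (auto simp: vec_eq_iff)
  \<comment> \<open>Conjugating by the identity with column \<open>k\<close> replaced by \<open>u\<close> moves \<open>u\<close> to \<open>axis k 1\<close>.\<close>
  define C :: "real^'n^'n" where "C = (\<chi> i j. if j = k then u $ i else mat 1 $ i $ j)"
  define w where "w = transpose C *v v"
  have "C *v axis k 1 = u"
    by (simp add: C_def matrix_vector_mult_def vec_eq_iff axis_def mat_def
        if_distrib[of "\<lambda>x. _ * x"] sum.delta' cong: if_cong)
  hence conj: "(mat 1 + rank_one u v) ** C = C ** (mat 1 + rank_one (axis k 1) w)"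
    by (simp add: matrix_add_rdistrib matrix_add_ldistrib matrix_mult_rank_one
        rank_one_mult_matrix w_def)
  have transposed: "transpose (mat 1 + rank_one (axis k 1) w)
      = (\<chi> i j. if j = k then (axis k 1 + w) $ i else mat 1 $ i $ j)"
    by (simp add: rank_one_def transpose_def mat_def axis_def vec_eq_iff)
  have "det (mat 1 + rank_one (axis k 1) w) = (axis k 1 + w) $ k"
    by (subst det_transpose[symmetric]) (simp only: transposed det_replace_column_mat1)
  hence "det (mat 1 + rank_one (axis k 1) w) = 1 + w $ k"
    by simp
  moreover have "w $ k = u \<bullet> v"
    by (simp add: w_def C_def matrix_vector_mult_def transpose_def inner_vec_def mult.commute)
  moreover have "det C = u $ k"
    unfolding C_def by (rule det_replace_column_mat1)
  ultimately show ?thesis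
    using conj det_mul[of "mat 1 + rank_one u v" C] det_mul[of C] uk by simp
qed

lemma det_add_outer_prod:
  fixes A :: "real^'n^'n"
  assumes "invertible A"
  shows "det (A + outer_prod x) = det A * (1 + x \<bullet> (matrix_inv A *v x))"
proof -
  have "A + outer_prod x = A ** (mat 1 + rank_one (matrix_inv A *v x) x)"
    by (simp add: matrix_add_ldistrib matrix_mult_rank_one matrix_inv_mult_vector[OF assms]
        outer_prod_eq_rank_one)
  thus ?thesis by (simp add: det_mul det_mat1_add_rank_one inner_commute)
qed

subsection \<open>Positive (semi)definite matrices\<close>

definition pos_semidef :: "real^'n^'n \<Rightarrow> bool" where
  "pos_semidef A \<longleftrightarrow> transpose A = A \<and> (\<forall>v. 0 \<le> v \<bullet> (A *v v))"

definition pos_def :: "real^'n^'n \<Rightarrow> bool" where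
  "pos_def A \<longleftrightarrow> transpose A = A \<and> (\<forall>v. v \<noteq> 0 \<longrightarrow> 0 < v \<bullet> (A *v v))"

lemma pos_def_imp_pos_semidef: "pos_def A \<Longrightarrow> pos_semidef A"
  unfolding pos_def_def pos_semidef_def by (metis inner_zero_left less_eq_real_def)

lemma pos_def_symmetric: "pos_def A \<Longrightarrow> A $ i $ j = A $ j $ i"
  unfolding pos_def_def by (metis transpose_def vec_lambda_beta)

lemma pos_def_diagonal_pos:
  assumes "pos_def A"
  shows "0 < A $ i $ i"
proof -
  have "0 < axis i 1 \<bullet> (A *v axis i 1)"
    using assms by (simp add: pos_def_def axis_eq_0_iff)
  also have "axis i 1 \<bullet> (A *v axis i 1) = A $ i $ i"
    by (simp only: inner_axis') (simp add: matrix_vector_mult_def axis_def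
        if_distrib[of "\<lambda>x. _ * x"] sum.delta' cong: if_cong)
  finally show ?thesis .
qed

lemma pos_def_mat1: "pos_def (mat 1)"
  by (simp add: pos_def_def)

lemma pos_def_scaleR: "pos_def A \<Longrightarrow> 0 < k \<Longrightarrow> pos_def (k *\<^sub>R A)"
  by (simp add: pos_def_def transpose_scalar scaleR_matrix_vector_assoc[symmetric])

lemma pos_def_add: "pos_def A \<Longrightarrow> pos_semidef B \<Longrightarrow> pos_def (A + B)"
  unfolding pos_def_def pos_semidef_def
  by (simp add: transpose_def vec_eq_iff matrix_vector_mult_add_rdistrib inner_add_right
      add_pos_nonneg)

lemma pos_semidef_outer_prod: "pos_semidef (outer_prod x)"
proof -
  have "transpose (rank_one x x) = rank_one x x"
    by (simp add: rank_one_def transpose_def vec_eq_iff mult.commute)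
  thus ?thesis
    by (simp add: pos_semidef_def outer_prod_eq_rank_one rank_one_mult_vector inner_commute)
qed

lemma pos_def_invertible:
  assumes "pos_def A"
  shows "invertible A"
proof -
  have "A *v v = 0 \<Longrightarrow> v = 0" for v
    using assms unfolding pos_def_def by (metis inner_zero_right less_irrefl)
  hence "inj ((*v) A)"
    by (simp add: linear_injective_0)
  thus ?thesis
    unfolding invertible_left_inverse matrix_left_invertible_injective .
qed

lemma pos_def_matrix_inv:
  assumes "pos_def A"
  shows "pos_def (matrix_inv A)"
proof -
  have inv: "invertible A" using pos_def_invertible[OF assms] .
  have "transpose (matrix_inv A) ** A = mat 1"
    using assms unfolding pos_def_def
    by (metis inv matrix_inv_right matrix_transpose_mul transpose_mat)
  hence symm: "transpose (matrix_inv A) = matrix_inv A"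
    using matrix_inv_unique[OF inv] by blast
  have "0 < v \<bullet> (matrix_inv A *v v)" if "v \<noteq> 0" for v
  proof -
    define w where "w = matrix_inv A *v v"
    have "A *v w = v" using matrix_inv_mult_vector[OF inv] w_def by simp
    moreover from this have "0 < w \<bullet> (A *v w)"
      using assms that unfolding pos_def_def by (metis matrix_vector_mult_0_right)
    ultimately show ?thesis using w_def by (simp add: inner_commute)
  qed
  thus ?thesis using symm by (simp add: pos_def_def)
qed

lemma pos_def_congruence:
  fixes A E :: "real^'n^'n"
  assumes "pos_def A" "invertible E"
  shows "pos_def (E ** A ** transpose E)"
proof -
  have "inj ((*v) (transpose E))"
    using inj_matrix_vector_mult transpose_invertible assms(2) by blast
  hence "transpose E *v v \<noteq> 0" if "v \<noteq> 0" for v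
    using that by (metis matrix_vector_mult_0_right injD)
  thus ?thesis
    using assms(1) unfolding pos_def_def
    by (simp add: matrix_transpose_mul matrix_mul_assoc dot_lmul_matrix[symmetric]
        matrix_vector_mul_assoc[symmetric])
qed

subsection \<open>Hadamard's inequality\<close>

text \<open>One step of symmetric Gaussian elimination: clearing row and column \<open>k\<close> by a
  congruence with determinant \<open>1\<close> replaces the other entries by the Schur complement.\<close>

lemma pos_def_eliminate:
  fixes P :: "real^'n^'n"
  assumes "pos_def P"
  obtains Q where "pos_def Q" "det Q = det P" "Q $ k $ k = P $ k $ k"
    "\<And>i. i \<noteq> k \<Longrightarrow> Q $ i $ k = 0" "\<And>j. j \<noteq> k \<Longrightarrow> Q $ k $ j = 0"
    "\<And>i j. i \<noteq> k \<Longrightarrow> j \<noteq> k \<Longrightarrow> Q $ i $ j = P $ i $ j - P $ i $ k * P $ k $ j / P $ k $ k"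
proof -
  have pkk: "0 < P $ k $ k" using pos_def_diagonal_pos[OF assms] .
  define u :: "real^'n" where "u = (\<chi> j. if j = k then 0 else P $ j $ k / P $ k $ k)"
  define E where "E = mat 1 + rank_one (- u) (axis k 1)"
  define Q where "Q = E ** P ** transpose E"
  have "det E = 1"
    by (simp add: E_def det_mat1_add_rank_one u_def inner_axis)
  hence "invertible E" by (simp add: invertible_det_nz)
  have E: "E $ i $ j = (if i = j then 1 else 0) - (if j = k then u $ i else 0)" for i j
    by (simp add: E_def rank_one_def mat_def axis_def)
  have EP: "(E ** P) $ i $ j = P $ i $ j - u $ i * P $ k $ j" for i j
    by (simp add: matrix_matrix_mult_def E left_diff_distrib sum_subtractf
        if_distrib[of "\<lambda>x. x * _"] sum.delta cong: if_cong)
  have Q: "Q $ i $ j = P $ i $ j - u $ i * P $ k $ j - u $ j * (P $ i $ k - u $ i * P $ k $ k)"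
    for i j
    by (simp add: Q_def matrix_matrix_mult_def[of "E ** P"] transpose_def EP E
        right_diff_distrib sum_subtractf if_distrib[of "\<lambda>x. _ * x"] sum.delta' cong: if_cong)
      (simp add: algebra_simps)
  have symm: "P $ i $ j = P $ j $ i" for i j
    using pos_def_symmetric[OF assms] .
  show ?thesis
  proof
    show "pos_def Q" unfolding Q_def by (rule pos_def_congruence) fact+
    show "det Q = det P" by (simp add: Q_def det_mul \<open>det E = 1\<close>)
    show "Q $ k $ k = P $ k $ k" by (simp add: Q u_def)
    show "Q $ i $ k = 0" if "i \<noteq> k" for i
      using that pkk by (simp add: Q u_def)
    show "Q $ k $ j = 0" if "j \<noteq> k" for j
      using that pkk by (simp add: Q u_def symm[of k j])
    show "Q $ i $ j = P $ i $ j - P $ i $ k * P $ k $ j / P $ k $ k"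
      if "i \<noteq> k" "j \<noteq> k" for i j
      using that pkk by (simp add: Q u_def symm[of j k] field_simps)
  qed
qed

text \<open>Induction on the set \<open>S\<close> of indices whose rows and columns may still carry
  off-diagonal entries; each elimination removes one index and can only decrease the diagonal.\<close>

lemma pos_def_det_bounds_supported:
  fixes P :: "real^'n^'n"
  assumes "finite S" "pos_def P"
    and "\<And>i j. i \<noteq> j \<Longrightarrow> i \<notin> S \<or> j \<notin> S \<Longrightarrow> P $ i $ j = 0"
  shows "0 < det P \<and> det P \<le> (\<Prod>i\<in>UNIV. P $ i $ i)"
  using assms
proof (induction S arbitrary: P rule: finite_induct)
  case empty
  hence "det P = (\<Prod>i\<in>UNIV. P $ i $ i)" by (intro det_diagonal) auto
  moreover have "0 < (\<Prod>i\<in>UNIV. P $ i $ i)"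
    using pos_def_diagonal_pos[OF empty.prems(1)] by (intro prod_pos) auto
  ultimately show ?case by simp
next
  case (insert k S)
  have pkk: "0 < P $ k $ k" using pos_def_diagonal_pos[OF insert.prems(1)] .
  obtain Q where Q: "pos_def Q" "det Q = det P" "Q $ k $ k = P $ k $ k"
    "\<And>i. i \<noteq> k \<Longrightarrow> Q $ i $ k = 0" "\<And>j. j \<noteq> k \<Longrightarrow> Q $ k $ j = 0"
    "\<And>i j. i \<noteq> k \<Longrightarrow> j \<noteq> k \<Longrightarrow> Q $ i $ j = P $ i $ j - P $ i $ k * P $ k $ j / P $ k $ k"
    using pos_def_eliminate[OF insert.prems(1)] by blast
  have "Q $ i $ j = 0" if "i \<noteq> j" "i \<notin> S \<or> j \<notin> S" for i j
  proof (cases "i = k \<or> j = k")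
    case True thus ?thesis using Q(4,5) that(1) by auto
  next
    case False
    hence out: "i \<notin> insert k S \<or> j \<notin> insert k S" using that(2) by auto
    hence "P $ i $ j = 0" using insert.prems(2) that(1) by blast
    moreover have "P $ i $ k = 0 \<or> P $ k $ j = 0"
      using out False insert.prems(2)[of i k] insert.prems(2)[of k j] by auto
    ultimately show ?thesis using Q(6) False by auto
  qed
  hence IH: "0 < det Q \<and> det Q \<le> (\<Prod>i\<in>UNIV. Q $ i $ i)"
    by (rule insert.IH[OF Q(1)])
  have "Q $ i $ i \<le> P $ i $ i" for i
  proof (cases "i = k")
    case False
    have "0 \<le> P $ i $ k * P $ k $ i / P $ k $ k"
      using pkk pos_def_symmetric[OF insert.prems(1), of i k] by simp
    thus ?thesis using Q(6) False by simp
  qed (simp add: Q(3))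
  hence "(\<Prod>i\<in>UNIV. Q $ i $ i) \<le> (\<Prod>i\<in>UNIV. P $ i $ i)"
    using pos_def_diagonal_pos[OF Q(1)] by (intro prod_mono) (auto simp: less_imp_le)
  thus ?case using IH Q(2) by simp
qed

lemma pos_def_det_pos: "pos_def P \<Longrightarrow> 0 < det P"
  using pos_def_det_bounds_supported[of UNIV P] by simp

lemma hadamard_det_le_prod_diagonal: "pos_def P \<Longrightarrow> det P \<le> (\<Prod>i\<in>UNIV. P $ i $ i)"
  using pos_def_det_bounds_supported[of UNIV P] by simp

lemma ln_det_mat1_add_le_trace:
  assumes "pos_def A"
  shows "ln (det (mat 1 + A)) \<le> trace A"
proof -
  have N: "pos_def (mat 1 + A)"
    using assms by (simp add: pos_def_add pos_def_mat1 pos_def_imp_pos_semidef)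
  have diag: "0 \<le> A $ i $ i" for i
    using pos_def_diagonal_pos[OF assms] less_imp_le by blast
  have "ln (det (mat 1 + A)) \<le> ln (\<Prod>i\<in>UNIV. (mat 1 + A) $ i $ i)"
    using hadamard_det_le_prod_diagonal[OF N] pos_def_det_pos[OF N] by simp
  also have "\<dots> = (\<Sum>i\<in>UNIV. ln (1 + A $ i $ i))"
    using diag by (simp add: mat_def ln_prod add_nonneg_eq_0_iff)
  also have "\<dots> \<le> (\<Sum>i\<in>UNIV. A $ i $ i)"
    using diag by (intro sum_mono ln_add_one_self_le_self)
  finally show ?thesis by (simp add: trace_def)
qed

lemma pos_def_matrix_inv_add_scaleR_mat1:
  "pos_def D \<Longrightarrow> 0 < k \<Longrightarrow> pos_def (matrix_inv D + k *\<^sub>R mat 1)"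
  by (intro pos_def_add pos_def_matrix_inv pos_def_imp_pos_semidef pos_def_scaleR pos_def_mat1)

text \<open>The point is \<open>D (D\<^sup>-\<^sup>1 + k I) = I + k D\<close>, to which Hadamard's inequality applies.\<close>

lemma ln_det_le_ln_det_inv_add_scaleR_mat1:
  assumes "pos_def D" "0 < k"
  shows "ln (det D) \<le> ln (det (matrix_inv (matrix_inv D + k *\<^sub>R mat 1))) + k * trace D"
proof -
  define M where "M = matrix_inv D + k *\<^sub>R mat 1"
  have M: "pos_def M"
    unfolding M_def using pos_def_matrix_inv_add_scaleR_mat1[OF assms] .
  have "ln (det D) + ln (det M) = ln (det (D ** M))"
    using pos_def_det_pos[OF assms(1)] pos_def_det_pos[OF M] by (simp add: det_mul ln_mult)
  also have "D ** M = mat 1 + k *\<^sub>R D"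
    unfolding M_def
    by (simp add: matrix_add_ldistrib matrix_inv_right[OF pos_def_invertible[OF assms(1)]]
        matrix_scalar_ac)
  also have "ln (det (mat 1 + k *\<^sub>R D)) \<le> k * trace D"
    using ln_det_mat1_add_le_trace[OF pos_def_scaleR[OF assms]] by (simp add: trace_scaleR)
  finally have "ln (det D) + ln (det M) \<le> k * trace D" .
  moreover have "ln (det (matrix_inv M)) = - ln (det M)"
    using pos_def_det_pos[OF M] by (simp add: det_matrix_inv[OF pos_def_invertible[OF M]] ln_div)
  ultimately show ?thesis
    unfolding M_def by linarith
qed

lemma inner_matrix_inv_nonneg:
  assumes "pos_def A"
  shows "0 \<le> x \<bullet> (matrix_inv A *v x)"
  using pos_def_imp_pos_semidef[OF pos_def_matrix_inv[OF assms]] by (simp add: pos_semidef_def)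

lemma inner_matrix_inv_add_outer_prod:
  fixes A :: "real^'n^'n" and x :: "real^'n"
  assumes "pos_def A"
  defines "q \<equiv> x \<bullet> (matrix_inv A *v x)"
  shows "x \<bullet> (matrix_inv (A + outer_prod x) *v x) = q / (1 + q)"
proof -
  have q: "0 \<le> q" unfolding q_def using inner_matrix_inv_nonneg[OF assms(1)] .
  define y where "y = matrix_inv A *v x"
  have "(A + outer_prod x) *v y = (1 + q) *\<^sub>R x"
    using pos_def_invertible[OF assms(1)]
    by (simp add: y_def q_def matrix_vector_mult_add_rdistrib matrix_inv_mult_vector
        outer_prod_eq_rank_one rank_one_mult_vector algebra_simps)
  hence "x = (1 / (1 + q)) *\<^sub>R ((A + outer_prod x) *v y)"
    using q by simp
  hence "matrix_inv (A + outer_prod x) *v x = (1 / (1 + q)) *\<^sub>R y"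
    using pos_def_invertible[OF pos_def_add[OF assms(1) pos_semidef_outer_prod]]
    by (metis matrix_inv_mult_vector(2) matrix_vector_mult_scaleR)
  thus ?thesis by (simp add: q_def y_def)
qed

lemma inner_matrix_inv_add_outer_prod_le_ln_det:
  fixes A :: "real^'n^'n"
  assumes "pos_def A"
  shows "x \<bullet> (matrix_inv (A + outer_prod x) *v x) \<le> ln (det (A + outer_prod x)) - ln (det A)"
proof -
  define q where "q = x \<bullet> (matrix_inv A *v x)"
  have q: "0 \<le> q" unfolding q_def using inner_matrix_inv_nonneg[OF assms] .
  have "ln (det (A + outer_prod x)) = ln (det A) + ln (1 + q)"
    using q pos_def_det_pos[OF assms]
    by (simp add: det_add_outer_prod[OF pos_def_invertible[OF assms]] q_def ln_mult)
  thus ?thesis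
    using inner_matrix_inv_add_outer_prod[OF assms, of x] ln_add1_ge[OF q] q_def
    by (simp add: add.commute)
qed

lemma pos_def_Dseq:
  assumes "0 < b" "b < c"
  shows "pos_def (Dseq b c x t)"
proof (induction t)
  case 0
  show ?case using assms by (simp add: pos_def_scaleR pos_def_mat1)
next
  case (Suc t)
  have "pos_def (matrix_inv (matrix_inv (Dseq b c x t) + (1/c) *\<^sub>R mat 1))"
    using assms by (intro pos_def_matrix_inv pos_def_matrix_inv_add_scaleR_mat1 Suc) simp
  thus ?case by (simp add: pos_def_add pos_semidef_outer_prod)
qed

lemma Dseq_step_le:
  assumes "0 < b" "b < c"
  shows "x (Suc t) \<bullet> (matrix_inv (Dseq b c x (Suc t)) *v x (Suc t))
    \<le> ln (det (Dseq b c x (Suc t))) - ln (det (Dseq b c x t)) + trace (Dseq b c x t) / c"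
proof -
  define A where "A = matrix_inv (matrix_inv (Dseq b c x t) + (1/c) *\<^sub>R mat 1)"
  have D: "pos_def (Dseq b c x t)" and "0 < 1 / c"
    using pos_def_Dseq[OF assms] assms by simp_all
  have A: "pos_def A"
    unfolding A_def by (intro pos_def_matrix_inv pos_def_matrix_inv_add_scaleR_mat1 D \<open>0 < 1 / c\<close>)
  have "ln (det (Dseq b c x t)) \<le> ln (det A) + (1/c) * trace (Dseq b c x t)"
    unfolding A_def by (rule ln_det_le_ln_det_inv_add_scaleR_mat1[OF D \<open>0 < 1 / c\<close>])
  moreover have "Dseq b c x (Suc t) = A + outer_prod (x (Suc t))"
    by (simp add: A_def)
  ultimately show ?thesis
    using inner_matrix_inv_add_outer_prod_le_ln_det[OF A, of "x (Suc t)"] by simp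
qed

lemma Dseq_sum_le:
  assumes "0 < b" "b < c"
  shows "(\<Sum>t=1..T. x t \<bullet> (matrix_inv (Dseq b c x t) *v x t))
    \<le> ln (det (Dseq b c x T)) - ln (det (Dseq b c x 0))
       + (1 / c) * (\<Sum>t=1..T. trace (Dseq b c x (t - 1)))"
proof (induction T)
  case (Suc T)
  thus ?case using Dseq_step_le[OF assms, where x = x and t = T]
    by (simp del: Dseq.simps add: distrib_left)
qed simp

theorem lemma5:
  fixes b c :: real and x :: "nat \<Rightarrow> real^'d" and T :: nat
  assumes "0 < b" and "b < c"
  shows "(\<Sum>t=1..T. x t \<bullet> (matrix_inv (Dseq b c x t) *v x t))
           \<le> ln (det ((1 / b) *\<^sub>R Dseq b c x T))
              + (1 / c) * (\<Sum>t=1..T. trace (Dseq b c x (t - 1)))"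
proof -
  define k where "k = b * c / (c - b)"
  have "b \<le> k" using assms by (simp add: k_def field_simps)
  hence "real CARD('d) * ln b \<le> ln (det (Dseq b c x 0))"
    using assms by (simp add: k_def [symmetric] det_scaleR ln_realpow mult_left_mono)
  moreover have "ln (det ((1 / b) *\<^sub>R Dseq b c x T))
      = ln (det (Dseq b c x T)) - real CARD('d) * ln b"
    using assms pos_def_det_pos[OF pos_def_Dseq[OF assms, of x T]]
    by (simp add: det_scaleR ln_mult ln_realpow ln_div)
  ultimately show ?thesis
    using Dseq_sum_le[OF assms, where T = T and x = x] by linarith
qed

end
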